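(* Let $n$ be a positive integer. Call a function $C:[n]^3\to\mathbb{Z}_{\ge 0}$ an SBC$(n)$ if its $3n^2$ line sums (the sums $\sum_{i} C(i,j,k)$ for fixed $(j,k)$, $\sum_{j} C(i,j,k)$ for fixed $(i,k)$, and $\sum_{k} C(i,j,k)$ for fixed $(i,j)$) are exactly the integers $0,1,\dots,3n^2-1$, each occurring once. If there exists an SBC$(n)$, then there exists an SBC$(mn)$ for every positive integer $m$.
   Context: $[n]=\{1,2,\dots,n\}$; indices in the line sums range over $[n]$. *)

theory Defs
  imports Main "HOL-Library.Multiset"
begin

text \<open>A function C : [n]^3 -> Z_{>=0} is modelled as C :: nat => nat => nat => nat,
  only its values on {1..n}^3 matter. The multiset of its 3n^2 line sums.\<close>

definition line_sums :: "nat \<Rightarrow> (nat \<Rightarrow> nat \<Rightarrow> nat \<Rightarrow> nat) \<Rightarrow> nat multiset" where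
  "line_sums n C =
     image_mset (\<lambda>(j,k). \<Sum>i\<in>{1..n}. C i j k) (mset_set ({1..n} \<times> {1..n}))
   + image_mset (\<lambda>(i,k). \<Sum>j\<in>{1..n}. C i j k) (mset_set ({1..n} \<times> {1..n}))
   + image_mset (\<lambda>(i,j). \<Sum>k\<in>{1..n}. C i j k) (mset_set ({1..n} \<times> {1..n}))"

definition SBC :: "nat \<Rightarrow> (nat \<Rightarrow> nat \<Rightarrow> nat \<Rightarrow> nat) \<Rightarrow> bool" where
  "SBC n C \<longleftrightarrow> line_sums n C = mset [0..<3 * n^2]"

end

theory Submission
  imports Defs
begin

text \<open>Given an SBC(n) \<open>C\<close>, write a coordinate \<open>x \<in> [mn]\<close> as \<open>x = n * a + i\<close> with block
  \<open>a < m\<close> and offset \<open>i \<in> [n]\<close>. The SBC(mn) \<open>D\<close> is \<open>m\<^sup>2 * C(i, j, k)\<close> on the cells whose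
  block triple \<open>(a, b, c)\<close> satisfies \<open>a + b + c \<equiv> 0 (mod m)\<close>, plus \<open>m * b + c\<close> on those of
  them whose offsets satisfy \<open>i + j + k \<equiv> 0 (mod n)\<close>, and \<open>0\<close> elsewhere. A line of \<open>[mn]\<^sup>3\<close>
  meets exactly one such block, and exactly one cell of the line inside it carries the extra
  term. Hence its sum is \<open>m\<^sup>2 * s + w\<close>, where \<open>s\<close> is the sum of the corresponding line of \<open>C\<close>
  and \<open>w < m\<^sup>2\<close> encodes the block position of the line. Lines correspond bijectively to
  pairs \<open>(s, w)\<close>, so the line sums of \<open>D\<close> are exactly \<open>0, \<dots>, 3m\<^sup>2n\<^sup>2 - 1\<close>.\<close>

lemma image_mset_mset_set_eq_iff_bij_betw:
  assumes "finite A" "finite B"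
  shows "image_mset f (mset_set A) = mset_set B \<longleftrightarrow> bij_betw f A B"
proof
  assume eq: "image_mset f (mset_set A) = mset_set B"
  then have "f ` A = B"
    using assms by (metis finite_set_mset_mset_set set_image_mset)
  moreover have "card A = card B"
    using arg_cong[OF eq, of size] by simp
  ultimately show "bij_betw f A B"
    using assms(1) by (simp add: bij_betw_def eq_card_imp_inj_on)
next
  assume "bij_betw f A B"
  then show "image_mset f (mset_set A) = mset_set B"
    by (simp add: bij_betw_def image_mset_mset_set)
qed

lemma bij_betw_if_inj_on_card_eq:
  assumes "inj_on f A" "f ` A \<subseteq> B" "finite B" "card A = card B"
  shows "bij_betw f A B"
  using assms by (metis bij_betw_def card_image card_subset_eq)

lemma mset_set_insert_Times:
  assumes "finite D" "finite T" "d \<notin> D"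
  shows "mset_set (insert d D \<times> T) = image_mset (Pair d) (mset_set T) + mset_set (D \<times> T)"
proof -
  have "insert d D \<times> T = Pair d ` T \<union> D \<times> T" by auto
  moreover have "Pair d ` T \<inter> D \<times> T = {}" using assms(3) by auto
  ultimately show ?thesis
    using assms(1,2) by (simp add: mset_set_Union image_mset_mset_set inj_on_def)
qed

lemma mult_add_less:
  fixes s w K S :: nat
  assumes "s < S" "w < K"
  shows "K * s + w < K * S"
proof -
  have "K * s + w < K * Suc s" using assms(2) by simp
  also have "\<dots> \<le> K * S" by (rule mult_le_mono2) (use assms(1) in simp)
  finally show ?thesis .
qed

lemma mult_add_eq_mult_add_iff:
  fixes s w s' w' K :: nat
  assumes "w < K" "w' < K"
  shows "K * s + w = K * s' + w' \<longleftrightarrow> s = s' \<and> w = w'"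
  using assms by (metis add.commute div_mult_self1 less_nat_zero_code mod_mult_self2 mod_less
      div_less add_0 mult.commute)

definition line_sum :: "nat \<Rightarrow> (nat \<Rightarrow> nat \<Rightarrow> nat \<Rightarrow> nat) \<Rightarrow> nat \<times> nat \<times> nat \<Rightarrow> nat" where
  "line_sum n C = (\<lambda>(d, p, q).
     if d = 0 then \<Sum>i\<in>{1..n}. C i p q
     else if d = 1 then \<Sum>j\<in>{1..n}. C p j q
     else \<Sum>k\<in>{1..n}. C p q k)"

definition lines :: "nat \<Rightarrow> (nat \<times> nat \<times> nat) set" where
  "lines n = {0, 1, 2} \<times> {1..n} \<times> {1..n}"

lemma finite_lines [simp]: "finite (lines n)"
  by (simp add: lines_def)

lemma card_lines: "card (lines n) = 3 * n^2"
  by (simp add: lines_def card_cartesian_product power2_eq_square)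

lemma line_sums_eq_image_mset: "line_sums n C = image_mset (line_sum n C) (mset_set (lines n))"
  by (simp add: line_sums_def lines_def mset_set_insert_Times line_sum_def
      image_mset.compositionality o_def case_prod_unfold)

lemma SBC_iff_bij_betw: "SBC n C \<longleftrightarrow> bij_betw (line_sum n C) (lines n) {..<3 * n^2}"
  by (simp add: SBC_def line_sums_eq_image_mset image_mset_mset_set_eq_iff_bij_betw
      atLeast0LessThan flip: mset_set_upto_eq_mset_upto)

definition neg_mod :: "nat \<Rightarrow> nat \<Rightarrow> nat" where
  "neg_mod m b = (m - b mod m) mod m"

lemma neg_mod_less: "0 < m \<Longrightarrow> neg_mod m b < m"
  by (simp add: neg_mod_def)

lemma add_mod_eq_0_iff:
  fixes a b m :: nat
  assumes "a < m"
  shows "(a + b) mod m = 0 \<longleftrightarrow> a = neg_mod m b"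
proof (cases "b mod m = 0")
  case True
  then show ?thesis
    using assms by (metis neg_mod_def mod_add_right_eq add_0_right mod_less diff_zero mod_self)
next
  case False
  define r where "r = b mod m"
  have r: "0 < r" "r < m" using False assms by (simp_all add: r_def)
  have "(a + b) mod m = (a + r) mod m" by (simp add: r_def mod_add_right_eq)
  also have "\<dots> = 0 \<longleftrightarrow> a + r = m"
  proof (cases "a + r < m")
    case False
    then have "(a + r) mod m = a + r - m" using assms r by (simp add: le_mod_geq)
    then show ?thesis using False by simp
  qed (use r in simp)
  finally show ?thesis using r by (auto simp: neg_mod_def simp flip: r_def)
qed

lemma neg_mod_add_left_inj:
  assumes "u < m" "u' < m" "neg_mod m (u + v) = neg_mod m (u' + v)"
  shows "u = u'"
proof -
  have "w = neg_mod m (neg_mod m (w + v) + v)" if "w < m" for w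
  proof -
    have "(neg_mod m (w + v) + (w + v)) mod m = 0"
      using add_mod_eq_0_iff[OF neg_mod_less] that by simp
    then show ?thesis
      using add_mod_eq_0_iff[OF that] by (metis add.left_commute)
  qed
  then show ?thesis using assms by metis
qed

lemma sum_if_add_mod_eq_0:
  fixes f :: "nat \<Rightarrow> 'a::comm_monoid_add"
  assumes "0 < m"
  shows "(\<Sum>a<m. if (a + b) mod m = 0 then f a else 0) = f (neg_mod m b)"
proof -
  have "(\<Sum>a<m. if (a + b) mod m = 0 then f a else 0) = (\<Sum>a<m. if a = neg_mod m b then f a else 0)"
    using add_mod_eq_0_iff by (intro sum.cong) auto
  also have "\<dots> = f (neg_mod m b)"
    using neg_mod_less[OF assms] by simp
  finally show ?thesis .
qed

definition block :: "nat \<Rightarrow> nat \<Rightarrow> nat" where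
  "block n x = (x - 1) div n"

definition offset :: "nat \<Rightarrow> nat \<Rightarrow> nat" where
  "offset n x = (x - 1) mod n + 1"

lemma block_Suc_mult_add [simp]: "i < n \<Longrightarrow> block n (Suc (a * n + i)) = a"
  by (simp add: block_def)

lemma offset_Suc_mult_add [simp]: "i < n \<Longrightarrow> offset n (Suc (a * n + i)) = Suc i"
  by (simp add: offset_def)

lemma block_less: "x \<in> {1..m * n} \<Longrightarrow> block n x < m"
  by (auto simp: block_def less_mult_imp_div_less)

lemma offset_mem: "0 < n \<Longrightarrow> offset n x \<in> {1..n}"
  by (simp add: offset_def Suc_leI)

lemma block_offset_inj:
  assumes "1 \<le> x" "1 \<le> y" "block n x = block n y" "offset n x = offset n y"
  shows "x = y"
proof -
  have "block n z * n + offset n z = z" if "1 \<le> z" for z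
    using that by (simp add: block_def offset_def)
  then show ?thesis using assms by metis
qed

lemma sum_blocks:
  fixes f :: "nat \<Rightarrow> 'a::comm_monoid_add"
  shows "(\<Sum>x\<in>{1..m * n}. f x) = (\<Sum>a<m. \<Sum>i<n. f (Suc (a * n + i)))"
proof -
  have "(\<Sum>x\<in>{1..m * n}. f x) = (\<Sum>x<m * n. f (Suc x))"
    by (simp add: sum.atLeast1_atMost_eq)
  also have "\<dots> = (\<Sum>a<m. \<Sum>x\<in>{a * n..<a * n + n}. f (Suc x))"
    by (simp add: sum.nat_group)
  also have "\<dots> = (\<Sum>a<m. \<Sum>i<n. f (Suc (a * n + i)))"
    by (simp add: sum.shift_bounds_nat_ivl[of _ 0, simplified] add.commute lessThan_atLeast0)
  finally show ?thesis .
qed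

lemma sum_blocks_if_add_mod_eq_0:
  fixes K :: nat
  assumes "0 < m" "0 < n"
  shows "(\<Sum>x\<in>{1..m * n}. if (block n x + \<beta>) mod m = 0
      then K * F (offset n x) + (if (offset n x + \<gamma>) mod n = 0 then V (block n x) else 0)
      else 0)
    = K * (\<Sum>i\<in>{1..n}. F i) + V (neg_mod m \<beta>)"
proof -
  have inner: "(\<Sum>i<n. K * F (Suc i) + (if (i + Suc \<gamma>) mod n = 0 then V a else 0))
      = K * (\<Sum>i\<in>{1..n}. F i) + V a" for a
    using sum_if_add_mod_eq_0[OF assms(2), of "Suc \<gamma>" "\<lambda>_. V a"]
    by (simp add: sum.distrib sum_distrib_left sum.atLeast1_atMost_eq)
  have "(\<Sum>x\<in>{1..m * n}. if (block n x + \<beta>) mod m = 0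
      then K * F (offset n x) + (if (offset n x + \<gamma>) mod n = 0 then V (block n x) else 0)
      else 0)
    = (\<Sum>a<m. \<Sum>i<n. if (a + \<beta>) mod m = 0
        then K * F (Suc i) + (if (i + Suc \<gamma>) mod n = 0 then V a else 0) else 0)"
    unfolding sum_blocks by (intro sum.cong refl) simp
  also have "\<dots> = (\<Sum>a<m. if (a + \<beta>) mod m = 0
        then \<Sum>i<n. K * F (Suc i) + (if (i + Suc \<gamma>) mod n = 0 then V a else 0) else 0)"
    by (intro sum.cong refl) auto
  also have "\<dots> = K * (\<Sum>i\<in>{1..n}. F i) + V (neg_mod m \<beta>)"
    by (simp only: inner sum_if_add_mod_eq_0[OF assms(1)])
  finally show ?thesis .
qed

definition blowup :: "nat \<Rightarrow> nat \<Rightarrow> (nat \<Rightarrow> nat \<Rightarrow> nat \<Rightarrow> nat) \<Rightarrow> nat \<Rightarrow> nat \<Rightarrow> nat \<Rightarrow> nat" where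
  "blowup m n C x y z =
     (if (block n x + block n y + block n z) mod m = 0
      then m^2 * C (offset n x) (offset n y) (offset n z)
        + (if (offset n x + offset n y + offset n z) mod n = 0
           then m * block n y + block n z else 0)
      else 0)"

text \<open>The line in direction \<open>d\<close> through the blocks \<open>u, v\<close> meets exactly one block \<open>(a, b, c)\<close>
  with \<open>a + b + c \<equiv> 0 (mod m)\<close>; its code is \<open>m * b + c\<close>.\<close>

definition block_code :: "nat \<Rightarrow> nat \<Rightarrow> nat \<Rightarrow> nat \<Rightarrow> nat" where
  "block_code m d u v =
     (if d = 0 then m * u + v
      else if d = 1 then m * neg_mod m (u + v) + v
      else m * v + neg_mod m (u + v))"

lemma block_code_less:
  assumes "u < m" "v < m"
  shows "block_code m d u v < m^2"
  using assms neg_mod_less[of m]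
  by (auto simp: block_code_def power2_eq_square intro: mult_add_less)

lemma block_code_inj:
  assumes "u < m" "v < m" "u' < m" "v' < m" "block_code m d u v = block_code m d u' v'"
  shows "u = u' \<and> v = v'"
  using assms neg_mod_less[of m]
  by (auto simp: block_code_def mult_add_eq_mult_add_iff split: if_splits
      dest: neg_mod_add_left_inj)

lemma line_sum_blowup:
  assumes "0 < m" "0 < n"
  shows "line_sum (m * n) (blowup m n C) (d, p, q)
    = m^2 * line_sum n C (d, offset n p, offset n q) + block_code m d (block n p) (block n q)"
proof -
  note sum_line = sum_blocks_if_add_mod_eq_0[OF assms, where K = "m^2"
      and \<beta> = "block n p + block n q" and \<gamma> = "offset n p + offset n q"]
  consider "d = 0" | "d = 1" | "d \<noteq> 0" "d \<noteq> 1" by blast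
  then show ?thesis
  proof cases
    case 1
    then show ?thesis
      using sum_line[where F = "\<lambda>i. C i (offset n p) (offset n q)"
          and V = "\<lambda>_. m * block n p + block n q"]
      by (simp add: line_sum_def blowup_def block_code_def ac_simps cong: if_cong)
  next
    case 2
    then show ?thesis
      using sum_line[where F = "\<lambda>j. C (offset n p) j (offset n q)"
          and V = "\<lambda>b. m * b + block n q"]
      by (simp add: line_sum_def blowup_def block_code_def ac_simps cong: if_cong)
  next
    case 3
    then show ?thesis
      using sum_line[where F = "\<lambda>k. C (offset n p) (offset n q) k"
          and V = "\<lambda>c. m * block n q + c"]
      by (simp add: line_sum_def blowup_def block_code_def ac_simps cong: if_cong)
  qed
qed

lemma SBC_blowup:
  assumes "0 < m" "0 < n" "SBC n C"
  shows "SBC (m * n) (blowup m n C)"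
proof -
  let ?L = "line_sum (m * n) (blowup m n C)"
  have bij: "bij_betw (line_sum n C) (lines n) {..<3 * n^2}"
    using assms(3) by (simp add: SBC_iff_bij_betw)
  have parts: "(d, offset n p, offset n q) \<in> lines n" "block n p < m" "block n q < m"
    if "(d, p, q) \<in> lines (m * n)" for d p q
    using that offset_mem[OF assms(2)] block_less by (auto simp: lines_def)
  have "(d, p, q) = (d', p', q')"
    if t: "(d, p, q) \<in> lines (m * n)" and t': "(d', p', q') \<in> lines (m * n)"
      and eq: "?L (d, p, q) = ?L (d', p', q')" for d p q d' p' q'
  proof -
    have "line_sum n C (d, offset n p, offset n q) = line_sum n C (d', offset n p', offset n q')"
      and code: "block_code m d (block n p) (block n q) = block_code m d' (block n p') (block n q')"
      using eq parts[OF t] parts[OF t'] block_code_less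
      by (simp_all add: line_sum_blowup[OF assms(1,2)] mult_add_eq_mult_add_iff)
    then have offsets: "d = d'" "offset n p = offset n p'" "offset n q = offset n q'"
      using bij parts(1)[OF t] parts(1)[OF t'] by (auto simp: bij_betw_def dest: inj_onD)
    moreover have "block n p = block n p'" "block n q = block n q'"
      using block_code_inj code parts[OF t] parts[OF t'] offsets(1) by blast+
    ultimately show ?thesis
      using t t' by (auto simp: lines_def intro: block_offset_inj)
  qed
  then have "inj_on ?L (lines (m * n))"
    by (auto intro!: inj_onI)
  moreover have "?L ` lines (m * n) \<subseteq> {..<3 * (m * n)^2}"
  proof clarify
    fix d p q assume t: "(d, p, q) \<in> lines (m * n)"
    have "line_sum n C (d, offset n p, offset n q) < 3 * n^2"
      using bij parts(1)[OF t] by (auto simp: bij_betw_def)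
    then have "?L (d, p, q) < m^2 * (3 * n^2)"
      using parts[OF t] by (simp add: line_sum_blowup[OF assms(1,2)] block_code_less mult_add_less)
    then show "?L (d, p, q) < 3 * (m * n)^2"
      by (simp add: power_mult_distrib ac_simps)
  qed
  ultimately show ?thesis
    by (simp add: SBC_iff_bij_betw bij_betw_if_inj_on_card_eq card_lines)
qed

theorem lemma2p1:
  fixes n :: nat
  assumes "n > 0"
    and "\<exists>C. SBC n C"
  shows "\<forall>m::nat. m > 0 \<longrightarrow> (\<exists>C. SBC (m * n) C)"
  using assms SBC_blowup by blast

end
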